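(* Let $0<\rho<\frac{\pi}{6}$, set $\theta_1=0$, $\theta_2=\frac{\pi}{2}+\rho$, $T_1=[\theta_2,\pi]$ and $T_2=[2\rho,\frac{\pi}{2}-\rho]$, and for $p>0$ define $\Delta_p(\theta)=|\cos(\theta-\theta_2)|^p+|\cos(\theta-\theta_1)|^p$. Then: (a) For all $0<p\le 2$ and all $\theta\in T_1$, $\Delta_p(\theta)\ge 1$. (b) For all $0<p\le\frac{\log 3}{\log 2}$ and all $\theta_i\in T_1$, $\theta_j\in T_2$, $\Delta_p(\theta_i)+\Delta_p(\theta_j)\ge 2$. *)

theory Defs
  imports Complex_Main
begin

definition Delta :: "real \<Rightarrow> real \<Rightarrow> real \<Rightarrow> real" where
  "Delta \<rho> p \<theta> = \<bar>cos (\<theta> - (pi/2 + \<rho>))\<bar> powr p + \<bar>cos (\<theta> - 0)\<bar> powr p"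

end

theory Submission
  imports Defs "HOL-Analysis.Convex"
begin

text \<open>
  Both parts reduce to inequalities between powers of sines. On T1,
  Delta_p(theta) = sin^p A + sin^p B with A, B in [rho, pi/2] and A + B = pi/2 + rho;
  then sin^2 A + sin^2 B >= 1 + sin^2 rho, and concavity of x |-> x^(p/2) turns this
  into Delta_p(theta) >= 1 + sin^p rho.
  On T2, Delta_p(theta) = sin^p u + sin^p w with rho + u + w = pi/2. For the critical
  exponent P = log_2 3, which makes sin^P(pi/6) = 1/3, any three positive angles
  summing to pi/2 satisfy sin^P a + sin^P b + sin^P c >= 1; hence
  Delta_P >= 1 - sin^P rho on T2, and the two bounds add up to 2. As Delta_p decreases
  in p, this covers all p <= P. (The hypothesis rho < pi/6 only makes T2 nonempty.)
  The three-angle inequality uses convexity of sin^P on (0, pi/6] to merge two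
  angles, which reduces it to the one-variable inequality 2 sin^P y + cos^P 2y >= 1;
  there the derivative changes sign at most once, from + to -, because the logarithm
  of the ratio of its two terms is concave.
\<close>

lemma concave_on_powr:
  assumes "0 < q" "q \<le> 1"
  shows "concave_on {0<..} (\<lambda>x::real. x powr q)"
proof (rule f''_le0_imp_concave[where f' = "\<lambda>x. q * x powr (q - 1)"
      and f'' = "\<lambda>x. q * ((q - 1) * x powr (q - 2))"])
  fix x :: real assume x: "x \<in> {0<..}"
  then show "((\<lambda>x. x powr q) has_real_derivative q * x powr (q - 1)) (at x)"
    and "((\<lambda>x. q * x powr (q - 1)) has_real_derivative q * ((q - 1) * x powr (q - 2))) (at x)"
    by (auto intro!: derivative_eq_intros simp: diff_diff_eq)
  show "q * ((q - 1) * x powr (q - 2)) \<le> 0"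
    using assms x by (simp add: mult_nonneg_nonpos mult_nonpos_nonneg)
qed simp

lemma concave_on_subset: "concave_on T f \<Longrightarrow> S \<subseteq> T \<Longrightarrow> convex S \<Longrightarrow> concave_on S f"
  unfolding concave_on_def by (rule convex_on_subset)

lemma concave_add_ge_endpoints:
  fixes f :: "real \<Rightarrow> real"
  assumes "concave_on {m..M} f" "f m \<le> f M" "a \<in> {m..M}" "b \<in> {m..M}" "M + m \<le> a + b"
  shows "f M + f m \<le> f a + f b"
proof -
  define k where "k = (f M - f m) / (M - m)"
  have "k \<ge> 0" using assms(2-3) by (simp add: k_def)
  have "f M + f m = k * (M - m) + 2 * f m"
    using assms(2-3) by (cases "M = m") (auto simp: k_def)
  also have "\<dots> \<le> k * (a - m) + f m + (k * (b - m) + f m)"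
    using mult_left_mono[OF assms(5) \<open>k \<ge> 0\<close>] by (simp add: algebra_simps)
  also have "\<dots> \<le> f a + f b"
    using concave_onD_Icc'[OF assms(1,3)] concave_onD_Icc'[OF assms(1,4)] by (simp add: k_def)
  finally show ?thesis .
qed

lemma sin_square_add_cos_diff_square:
  "sin A ^ 2 + cos (A - r) ^ 2 = 1 + sin r * sin (2 * A - r :: real)"
  using sin_cos_squared_add[of A] sin_cos_squared_add[of r]
  unfolding cos_diff sin_diff sin_double cos_double by algebra

lemma sin_le_sin_between:
  assumes "0 \<le> r" "r \<le> x" "x \<le> pi - r"
  shows "sin r \<le> sin x"
proof (cases "x \<le> pi/2")
  case True
  then show ?thesis using assms by (intro sin_monotone_2pi_le) auto
next
  case False
  then have "sin r \<le> sin (pi - x)" using assms by (intro sin_monotone_2pi_le) auto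
  then show ?thesis by simp
qed

lemma sin_square_add_sin_square_ge:
  assumes "0 \<le> r" "r \<le> A" "A \<le> pi/2" "A + B = pi/2 + r"
  shows "1 + sin r ^ 2 \<le> sin A ^ 2 + sin B ^ 2"
proof -
  have "A - r = pi/2 - B" using assms(4) by simp
  then have "sin B = cos (A - r)" by (simp add: cos_sin_eq)
  then have "sin A ^ 2 + sin B ^ 2 = 1 + sin r * sin (2 * A - r)"
    by (simp add: sin_square_add_cos_diff_square)
  moreover have "sin r * sin r \<le> sin r * sin (2 * A - r)"
    using assms by (intro mult_left_mono sin_le_sin_between sin_ge_zero) auto
  ultimately show ?thesis by (simp add: power2_eq_square)
qed

lemma sin_powr_add_sin_powr_ge:
  assumes "0 < p" "p \<le> 2" "0 < r" "r \<le> A" "A \<le> pi/2" "r \<le> B" "B \<le> pi/2" "A + B = pi/2 + r"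
  shows "1 + sin r powr p \<le> sin A powr p + sin B powr p"
proof -
  have sin_powr: "sin x powr p = (sin x ^ 2) powr (p/2)" if "0 < x" "x < pi" for x
  proof -
    have "sin x ^ 2 = sin x powr 2" using sin_gt_zero[OF that] by (simp add: powr_realpow)
    then show ?thesis by (simp add: powr_powr)
  qed
  have "0 < sin r" using assms by (intro sin_gt_zero) auto
  have sin_square_mem: "sin x ^ 2 \<in> {sin r ^ 2..1}" if "r \<le> x" "x \<le> pi/2" for x
    using that assms(3) \<open>0 < sin r\<close>
    by (auto intro!: power_mono sin_monotone_2pi_le simp: abs_square_le_1)
  have "{sin r ^ 2..1} \<subseteq> {0<..}"
    using zero_less_power[OF \<open>0 < sin r\<close>, of 2]
    by (metis atLeastAtMost_iff greaterThan_iff less_le_trans subsetI)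
  then have "concave_on {sin r ^ 2..1} (\<lambda>x. x powr (p/2))"
    using assms(1,2) by (intro concave_on_subset[OF concave_on_powr]) auto
  moreover have "(sin r ^ 2) powr (p/2) \<le> 1 powr (p/2)"
    using assms(1) by (simp add: abs_square_le_1 powr_le1)
  moreover note sin_square_mem[OF assms(4,5)] sin_square_mem[OF assms(6,7)]
  moreover have "1 + sin r ^ 2 \<le> sin A ^ 2 + sin B ^ 2"
    using assms by (intro sin_square_add_sin_square_ge) auto
  ultimately have "1 powr (p/2) + (sin r ^ 2) powr (p/2) \<le> (sin A ^ 2) powr (p/2) + (sin B ^ 2) powr (p/2)"
    by (rule concave_add_ge_endpoints)
  then show ?thesis
    using sin_powr[of r] sin_powr[of A] sin_powr[of B] assms by simp
qed

lemma two_powr_eq_3_bounds: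
  assumes "2 powr P = (3::real)"
  shows "4/3 \<le> P" "P \<le> 2"
proof -
  have P: "P = ln 3 / ln 2"
    using arg_cong[OF assms, of ln] by (simp add: ln_powr field_simps)
  have "ln (2 ^ 4) \<le> ln (3 ^ 3 :: real)" "ln 3 \<le> ln (2 ^ 2 :: real)"
    by simp_all
  then show "4/3 \<le> P" "P \<le> 2"
    unfolding P ln_realpow by (simp_all add: field_simps)
qed

lemma convex_on_sin_powr:
  assumes "4/3 \<le> P"
  shows "convex_on {0<..pi/6} (\<lambda>x. sin x powr P)"
proof (rule f''_ge0_imp_convex[where f' = "\<lambda>x. P * sin x powr (P - 1) * cos x"
      and f'' = "\<lambda>x. P * ((P - 1) * sin x powr (P - 2) * cos x * cos x - sin x powr (P - 1) * sin x)"])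
  fix x :: real assume x: "x \<in> {0<..pi/6}"
  have "0 < sin x" using x by (intro sin_gt_zero) auto
  then show "((\<lambda>x. sin x powr P) has_real_derivative P * sin x powr (P - 1) * cos x) (at x)"
    and "((\<lambda>x. P * sin x powr (P - 1) * cos x) has_real_derivative
      P * ((P - 1) * sin x powr (P - 2) * cos x * cos x - sin x powr (P - 1) * sin x)) (at x)"
    by (auto intro!: derivative_eq_intros simp: algebra_simps)
  have "sin x \<le> sin (pi/6)" using x by (intro sin_monotone_2pi_le) auto
  then have "sin x ^ 2 \<le> (1/2) ^ 2"
    using \<open>0 < sin x\<close> by (intro power_mono) (auto simp: sin_30)
  then have "sin x ^ 2 \<le> 1/4" by (simp add: power_divide)
  then have "3/4 \<le> cos x ^ 2"
    using sin_cos_squared_add[of x] by linarith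
  then have "(1/3) * (3/4) \<le> (P - 1) * cos x ^ 2"
    using assms by (intro mult_mono) auto
  with \<open>sin x ^ 2 \<le> 1/4\<close> have tan_bound: "sin x * sin x \<le> (P - 1) * (cos x * cos x)"
    by (simp add: power2_eq_square)
  have "sin x powr (P - 1) = sin x powr (P - 2) * sin x"
    using \<open>0 < sin x\<close> by (simp add: powr_add[of _ "P - 2" 1, simplified])
  then have "P * ((P - 1) * sin x powr (P - 2) * cos x * cos x - sin x powr (P - 1) * sin x)
      = P * (sin x powr (P - 2) * ((P - 1) * (cos x * cos x) - sin x * sin x))"
    by algebra
  then show "0 \<le> P * ((P - 1) * sin x powr (P - 2) * cos x * cos x - sin x powr (P - 1) * sin x)"
    using tan_bound assms by simp
qed simp

lemma concave_on_ln_affine_combination: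
  assumes "0 \<le> \<alpha>" "0 \<le> \<beta>"
  shows "concave_on {0<..<1} (\<lambda>v. c + \<alpha> * ln v + \<beta> * ln (1 - v))"
proof (rule f''_le0_imp_concave[where f' = "\<lambda>v. \<alpha> / v - \<beta> / (1 - v)"
      and f'' = "\<lambda>v. - \<alpha> / v^2 - \<beta> / (1 - v)^2"])
  fix x :: real assume x: "x \<in> {0<..<1}"
  then show "((\<lambda>v. c + \<alpha> * ln v + \<beta> * ln (1 - v)) has_real_derivative \<alpha> / x - \<beta> / (1 - x)) (at x)"
    and "((\<lambda>v. \<alpha> / v - \<beta> / (1 - v)) has_real_derivative - \<alpha> / x^2 - \<beta> / (1 - x)^2) (at x)"
    by (auto intro!: derivative_eq_intros simp: power2_eq_square field_simps)
  have "0 \<le> \<alpha> / x^2" "0 \<le> \<beta> / (1 - x)^2" using assms by simp_all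
  then show "- \<alpha> / x^2 - \<beta> / (1 - x)^2 \<le> 0" by linarith
qed simp

text \<open>A concave K vanishing at a is nonnegative on an initial segment of [a, b) and
  negative after it, so G first increases and then decreases.\<close>

lemma min_endpoints_le_if_deriv_sign_concave:
  fixes G G' K :: "real \<Rightarrow> real"
  assumes w: "a \<le> w" "w \<le> b"
    and G_cont: "continuous_on {a..b} G"
    and G_deriv: "\<And>v. a < v \<Longrightarrow> v < b \<Longrightarrow> (G has_real_derivative G' v) (at v)"
    and sign: "\<And>v. a < v \<Longrightarrow> v < b \<Longrightarrow> 0 \<le> G' v \<longleftrightarrow> 0 \<le> K v"
    and K: "concave_on {a..<b} K" "K a = 0"
  shows "min (G a) (G b) \<le> G w"
proof (cases "w = b")
  case False
  then have "w < b" using w by simp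
  have K_chord: "K y / (y - a) * (x - a) \<le> K x" if "a \<le> x" "x \<le> y" "y < b" for x y
  proof -
    have "concave_on {a..y} K" using that by (intro concave_on_subset[OF K(1)]) auto
    with that K(2) show ?thesis using concave_onD_Icc'[of a y K x] by simp
  qed
  show ?thesis
  proof (cases "0 \<le> K w")
    case True
    have "G a \<le> G w"
    proof (rule DERIV_nonneg_imp_increasing_open[OF w(1)])
      fix v assume v: "a < v" "v < w"
      then have "0 \<le> K w / (w - a) * (v - a)" using True by simp
      with K_chord[of v w] v \<open>w < b\<close> have "0 \<le> G' v" by (simp add: sign)
      then show "\<exists>y. (G has_real_derivative y) (at v) \<and> 0 \<le> y"
        using G_deriv[of v] v \<open>w < b\<close> by (meson less_trans)
    qed (use G_cont w in \<open>auto intro: continuous_on_subset\<close>)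
    then show ?thesis by simp
  next
    case False
    have "G b \<le> G w"
    proof (rule DERIV_nonpos_imp_decreasing_open[OF w(2)])
      fix v assume v: "w < v" "v < b"
      have "a < w" using False K(2) w by (cases "a = w") auto
      then have "K v / (v - a) * (w - a) < 0" using K_chord[of w v] False v by simp
      then have "K v < 0" using \<open>a < w\<close> v by (simp add: divide_less_0_iff mult_less_0_iff)
      with v \<open>a < w\<close> have "G' v \<le> 0" using sign[of v] by simp
      then show "\<exists>y. (G has_real_derivative y) (at v) \<and> y \<le> 0"
        using G_deriv[of v] v \<open>a < w\<close> by (meson less_trans)
    qed (use G_cont w in \<open>auto intro: continuous_on_subset\<close>)
    then show ?thesis by simp
  qed
qed simp

lemma two_powr_half_add_powr_ge_1:
  fixes P :: real
  assumes P: "2 powr P = 3" and w: "1/2 \<le> w" "w \<le> 1"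
  shows "1 \<le> 2 * ((1 - w)/2) powr (P/2) + w powr P"
proof -
  note P_bounds = two_powr_eq_3_bounds[OF P]
  define G where "G v = 2 * ((1 - v)/2) powr (P/2) + v powr P" for v :: real
  define G' where "G' v = P * v powr (P - 1) - P/2 * ((1 - v)/2) powr (P/2 - 1)" for v :: real
  define K where "K v = P/2 * ln 2 + (P - 1) * ln v + (1 - P/2) * ln (1 - v)" for v :: real
  have "(1/2::real) powr P = 1/3" using P by (simp add: powr_divide)
  moreover have "(1/4::real) powr (P/2) = (1/2) powr P"
    using powr_powr[of "1/2::real" 2 "P/2"] by (simp add: powr_numeral power2_eq_square)
  ultimately have "G (1/2) = 1" by (simp add: G_def)
  moreover have "G 1 = 1" by (simp add: G_def)
  moreover have "min (G (1/2)) (G 1) \<le> G w"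
  proof (rule min_endpoints_le_if_deriv_sign_concave[where G' = G' and K = K, OF w])
    show "continuous_on {1/2..1} G"
      unfolding G_def using P_bounds
      by (intro continuous_intros continuous_on_powr') auto
    fix v :: real assume v: "1/2 < v" "v < 1"
    then show "(G has_real_derivative G' v) (at v)"
      unfolding G_def[abs_def] G'_def
      by (auto intro!: derivative_eq_intros simp: algebra_simps)
    define X where "X = P * v powr (P - 1)"
    define Y where "Y = P/2 * ((1 - v)/2) powr (P/2 - 1)"
    have "0 < X" "0 < Y" using v P_bounds by (simp_all add: X_def Y_def)
    moreover have "K v = ln X - ln Y"
      using v P_bounds by (simp add: K_def X_def Y_def ln_mult ln_div algebra_simps)
    moreover have "G' v = X - Y" by (simp add: G'_def X_def Y_def)
    ultimately show "0 \<le> G' v \<longleftrightarrow> 0 \<le> K v" by simp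
  next
    show "concave_on {1/2..<1} K"
      unfolding K_def[abs_def] using P_bounds
      by (intro concave_on_subset[OF concave_on_ln_affine_combination]) auto
    show "K (1/2) = 0" by (simp add: K_def ln_div algebra_simps)
  qed
  ultimately show ?thesis by (simp add: G_def)
qed

lemma two_sin_powr_add_cos_powr_ge_1:
  fixes P :: real
  assumes P: "2 powr P = 3" and y: "0 < y" "y \<le> pi/6"
  shows "1 \<le> 2 * sin y powr P + cos (2 * y) powr P"
proof -
  have "cos (pi/3) \<le> cos (2 * y)" using y by (intro cos_monotone_0_pi_le) auto
  then have "1/2 \<le> cos (2 * y)" by (simp add: cos_60)
  then have "1 \<le> 2 * ((1 - cos (2 * y))/2) powr (P/2) + cos (2 * y) powr P"
    by (intro two_powr_half_add_powr_ge_1[OF P]) auto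
  moreover have "sin y powr P = (sin y ^ 2) powr (P/2)"
  proof -
    have "sin y ^ 2 = sin y powr 2" using sin_gt_zero[of y] y by (simp add: powr_realpow)
    then show ?thesis by (simp add: powr_powr)
  qed
  ultimately show ?thesis by (simp add: cos_double_sin)
qed

lemma sin_powr_sum_ge_1_two_small:
  fixes P :: real
  assumes P: "2 powr P = 3" and abc: "0 < a" "a \<le> pi/6" "0 < b" "b \<le> pi/6" "a + b + c = pi/2"
  shows "1 \<le> sin a powr P + sin b powr P + sin c powr P"
proof -
  define y where "y = (a + b)/2"
  have "sin ((1 - 1/2) *\<^sub>R a + (1/2) *\<^sub>R b) powr P
      \<le> (1 - 1/2) * sin a powr P + (1/2) * sin b powr P"
    using abc two_powr_eq_3_bounds[OF P]
    by (intro convex_onD[OF convex_on_sin_powr]) auto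
  then have "2 * sin y powr P \<le> sin a powr P + sin b powr P"
    by (simp add: y_def field_simps)
  moreover have "1 \<le> 2 * sin y powr P + cos (2 * y) powr P"
    using abc by (intro two_sin_powr_add_cos_powr_ge_1[OF P]) (auto simp: y_def)
  moreover have "cos (2 * y) = sin c"
  proof -
    have "2 * y = pi/2 - c" using abc by (simp add: y_def)
    then show ?thesis by (simp add: cos_sin_eq)
  qed
  ultimately show ?thesis by simp
qed

text \<open>With f = sin^P, merging a with c and with b gives 2 f((a+c)/2) + f b >= 1 and
  2 f((a+b)/2) + f c >= 1; both midpoints lie in [a, pi/6], where the chord of f
  bounds 2 f((a+c)/2) + 2 f((a+b)/2) by f a + 1.\<close>

lemma sin_powr_sum_ge_1_one_small:
  fixes P :: real
  assumes P: "2 powr P = 3" and abc: "0 < a" "pi/6 < b" "pi/6 < c" "a + b + c = pi/2"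
  shows "1 \<le> sin a powr P + sin b powr P + sin c powr P"
proof -
  define f where "f x = sin x powr P" for x
  define s where "s = pi/6"
  have "a < s" using abc by (simp add: s_def)
  have "f s = 1/3" using P by (simp add: f_def s_def sin_30 powr_divide)
  have F: "1 \<le> 2 * f ((a + x)/2) + f y" if "0 < x" "s \<le> y" "a + x + y = pi/2" for x y
  proof -
    define z where "z = (a + x)/2"
    have "2 * z = pi/2 - y" using that by (simp add: z_def)
    then have "cos (2 * z) = sin y" by (simp add: cos_sin_eq)
    moreover have "1 \<le> 2 * sin z powr P + cos (2 * z) powr P"
      using abc that by (intro two_sin_powr_add_cos_powr_ge_1[OF P]) (auto simp: z_def s_def)
    ultimately show ?thesis unfolding f_def z_def[symmetric] by simp
  qed
  have "convex_on {a..s} f"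
    unfolding f_def[abs_def] s_def using abc two_powr_eq_3_bounds[OF P]
    by (intro convex_on_subset[OF convex_on_sin_powr]) auto
  define k where "k = (f s - f a) / (s - a)"
  have chord: "f y \<le> k * (y - a) + f a" if "a \<le> y" "y \<le> s" for y
    using convex_onD_Icc'[OF \<open>convex_on {a..s} f\<close>, of y] that by (simp add: k_def)
  have "f ((a + c)/2) \<le> k * ((a + c)/2 - a) + f a" "f ((a + b)/2) \<le> k * ((a + b)/2 - a) + f a"
    by (intro chord; use abc in \<open>simp add: s_def\<close>)+
  moreover have "k * ((a + c)/2 - a) + k * ((a + b)/2 - a) = 3/2 * (f s - f a)"
  proof -
    have "(a + c)/2 - a + ((a + b)/2 - a) = 3/2 * (s - a)"
      using abc by (simp add: s_def field_simps)
    then have "k * ((a + c)/2 - a) + k * ((a + b)/2 - a) = 3/2 * (k * (s - a))"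
      by (metis distrib_left mult.left_commute)
    then show ?thesis using \<open>a < s\<close> by (simp add: k_def)
  qed
  moreover have "1 \<le> 2 * f ((a + c)/2) + f b" "1 \<le> 2 * f ((a + b)/2) + f c"
    using abc by (auto intro!: F simp: s_def)
  ultimately have "1 \<le> f a + f b + f c" using \<open>f s = 1/3\<close> by argo
  then show ?thesis by (simp add: f_def)
qed

lemma sin_powr_sum_ge_1:
  fixes P :: real
  assumes P: "2 powr P = 3" and abc: "0 < a" "0 < b" "0 < c" "a + b + c = pi/2"
  shows "1 \<le> sin a powr P + sin b powr P + sin c powr P"
proof -
  note two_small = sin_powr_sum_ge_1_two_small[OF P]
    and one_small = sin_powr_sum_ge_1_one_small[OF P]
  consider "a \<le> pi/6" "b \<le> pi/6" | "a \<le> pi/6" "c \<le> pi/6" | "b \<le> pi/6" "c \<le> pi/6"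
    | "pi/6 < b" "pi/6 < c" | "pi/6 < a" "pi/6 < c" | "pi/6 < a" "pi/6 < b"
    by linarith
  then show ?thesis
  proof cases
    case 1 then show ?thesis using two_small[of a b c] abc by simp
  next
    case 2 then show ?thesis using two_small[of a c b] abc by (simp add: ac_simps)
  next
    case 3 then show ?thesis using two_small[of b c a] abc by (simp add: ac_simps)
  next
    case 4 then show ?thesis using one_small[of a b c] abc by simp
  next
    case 5 then show ?thesis using one_small[of b a c] abc by (simp add: ac_simps)
  next
    case 6 then show ?thesis using one_small[of c a b] abc by (simp add: ac_simps)
  qed
qed

lemma Delta_eq: "Delta \<rho> p \<theta> = \<bar>sin (\<theta> - \<rho>)\<bar> powr p + \<bar>cos \<theta>\<bar> powr p"
proof -
  have "cos (\<theta> - (pi/2 + \<rho>)) = sin (\<theta> - \<rho>)"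
    by (simp add: cos_diff cos_add sin_add sin_diff)
  then show ?thesis by (simp add: Delta_def)
qed

lemma Delta_antimono_exponent:
  assumes "0 < p" "p \<le> q"
  shows "Delta \<rho> q \<theta> \<le> Delta \<rho> p \<theta>"
  unfolding Delta_eq using assms by (intro add_mono powr_mono') auto

lemma Delta_ge_1_add_sin_powr:
  assumes "0 < p" "p \<le> 2" "0 < \<rho>" "\<theta> \<in> {pi/2 + \<rho>..pi}"
  shows "1 + sin \<rho> powr p \<le> Delta \<rho> p \<theta>"
proof -
  define A where "A = pi - \<theta> + \<rho>"
  define B where "B = \<theta> - pi/2"
  have "\<rho> \<le> A" "A \<le> pi/2" "\<rho> \<le> B" "B \<le> pi/2"
    using assms by (auto simp: A_def B_def)
  moreover have "sin (\<theta> - \<rho>) = sin A"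
    using sin_pi_minus[of "\<theta> - \<rho>"] by (simp add: A_def algebra_simps)
  moreover have "cos \<theta> = - sin B" by (simp add: B_def sin_diff)
  moreover have "0 \<le> sin A" "0 \<le> sin B"
    using calculation assms(3) by (auto intro!: sin_ge_zero)
  ultimately show ?thesis
    using sin_powr_add_sin_powr_ge[of p \<rho> A B] assms by (simp add: Delta_eq A_def B_def)
qed

lemma Delta_ge_1_diff_sin_powr:
  fixes P :: real
  assumes P: "2 powr P = 3" and "0 < \<rho>" "\<theta> \<in> {2 * \<rho>..pi/2 - \<rho>}"
  shows "1 - sin \<rho> powr P \<le> Delta \<rho> P \<theta>"
proof -
  have "0 \<le> sin (\<theta> - \<rho>)" "0 \<le> cos \<theta>"
    using assms by (auto intro!: sin_ge_zero cos_ge_zero)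
  moreover have "cos \<theta> = sin (pi/2 - \<theta>)" by (simp add: sin_diff)
  moreover have "1 \<le> sin \<rho> powr P + sin (\<theta> - \<rho>) powr P + sin (pi/2 - \<theta>) powr P"
    using assms by (intro sin_powr_sum_ge_1[OF P]) auto
  ultimately show ?thesis by (simp add: Delta_eq)
qed

theorem lemma2p10:
  fixes \<rho> :: real
  assumes "0 < \<rho>" and "\<rho> < pi / 6"
  shows "(\<forall>p \<theta>. 0 < p \<and> p \<le> 2 \<and> \<theta> \<in> {pi/2 + \<rho> .. pi} \<longrightarrow> Delta \<rho> p \<theta> \<ge> 1)
       \<and> (\<forall>p \<theta>i \<theta>j. 0 < p \<and> p \<le> ln 3 / ln 2 \<and> \<theta>i \<in> {pi/2 + \<rho> .. pi}
            \<and> \<theta>j \<in> {2 * \<rho> .. pi/2 - \<rho>} \<longrightarrow> Delta \<rho> p \<theta>i + Delta \<rho> p \<theta>j \<ge> 2)"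
proof (intro conjI allI impI; elim conjE)
  fix p \<theta> :: real
  assume "0 < p" "p \<le> 2" "\<theta> \<in> {pi/2 + \<rho> .. pi}"
  then show "Delta \<rho> p \<theta> \<ge> 1"
    using Delta_ge_1_add_sin_powr[of p \<rho> \<theta>] powr_ge_zero[of "sin \<rho>" p] assms(1) by linarith
next
  fix p \<theta>i \<theta>j :: real
  assume p: "0 < p" "p \<le> ln 3 / ln 2"
    and \<theta>: "\<theta>i \<in> {pi/2 + \<rho> .. pi}" "\<theta>j \<in> {2 * \<rho> .. pi/2 - \<rho>}"
  define P :: real where "P = ln 3 / ln 2"
  have P: "2 powr P = 3" by (simp add: P_def powr_def)
  have "Delta \<rho> P \<theta>i \<le> Delta \<rho> p \<theta>i" "Delta \<rho> P \<theta>j \<le> Delta \<rho> p \<theta>j"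
    using p by (intro Delta_antimono_exponent; simp add: P_def)+
  moreover have "1 + sin \<rho> powr P \<le> Delta \<rho> P \<theta>i"
    using Delta_ge_1_add_sin_powr two_powr_eq_3_bounds[OF P] assms(1) \<theta>(1) by simp
  moreover have "1 - sin \<rho> powr P \<le> Delta \<rho> P \<theta>j"
    using Delta_ge_1_diff_sin_powr[OF P assms(1) \<theta>(2)] .
  ultimately show "Delta \<rho> p \<theta>i + Delta \<rho> p \<theta>j \<ge> 2"
    by linarith
qed

end
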